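(* In $\mathrm{HMF}(\mathbb{C}^2,\Gamma_W,W)$, for each $1\le i\le p-1$ and $1\le j\le q-1$, the objects $K_{x,i}$ and $K_{y,j}$ are orthogonal to $K_f$ (all graded morphisms in both directions vanish).
   Context: Let $p,q\ge2$ be integers and $W=x^py+xy^q$. Let $L$ be the abelian group generated by $\vec x,\vec y,\vec c$ modulo $p\vec x+\vec y=\vec x+q\vec y=\vec c$; $S=\mathbb{C}[x,y]$ is $L$-graded with $\deg x=\vec x$, $\deg y=\vec y$, and $R=S/(W)$; $M(l)_k=M_{k+l}$. $\mathrm{HMF}(\mathbb{C}^2,\Gamma_W,W)$ is the homotopy category of $L$-graded matrix factorisations of $W$, equivalent to $D^b(\mathrm{gr}R)/\mathrm{Perf}(\mathrm{gr}R)$, in which a finitely generated $L$-graded $R$-module is identified with its stabilisation; $\mathrm{Hom}^n(X,Y)=\mathrm{Hom}(X,Y[n])$. Let $f=x^{p-1}+y^{q-1}$. $K_x=R/(x)$, $K_y=R/(y)$, $K_f=R/(f)$, $K_{x,i}=K_x((i+1-p)\vec x)$, $K_{y,j}=K_y((j+1-q)\vec y)$. *)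

theory Defs
  imports "HOL-Computational_Algebra.Polynomial" Complex_Main
begin

text \<open>Bivariate polynomials C[x,y]: polynomials in y whose coefficients are
polynomials in x.  The coefficient of x^a y^b in P is mcoeff P a b.\<close>

type_synonym bpoly = "complex poly poly"

definition mcoeff :: "bpoly \<Rightarrow> nat \<Rightarrow> nat \<Rightarrow> complex" where
  "mcoeff P a b = coeff (coeff P b) a"

definition X :: bpoly where "X = [:[:0, 1:]:]"
definition Y :: bpoly where "Y = [:0, 1:]"

definition Wpot :: "nat \<Rightarrow> nat \<Rightarrow> bpoly" where
  "Wpot p q = X ^ p * Y + X * Y ^ q"

definition fpol :: "nat \<Rightarrow> nat \<Rightarrow> bpoly" where
  "fpol p q = X ^ (p - 1) + Y ^ (q - 1)"

text \<open>The grading group L.  Eliminating c = p x + y, L is Z x + Z y modulo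
(p-1) x = (q-1) y.  An element a x + b y is represented by (a,b) :: int \<times> int;
Leq decides equality in L.\<close>

type_synonym deg = "int \<times> int"

definition dadd :: "deg \<Rightarrow> deg \<Rightarrow> deg" where
  "dadd u v = (fst u + fst v, snd u + snd v)"
definition dsub :: "deg \<Rightarrow> deg \<Rightarrow> deg" where
  "dsub u v = (fst u - fst v, snd u - snd v)"

definition Leq :: "nat \<Rightarrow> nat \<Rightarrow> deg \<Rightarrow> deg \<Rightarrow> bool" where
  "Leq p q u v \<longleftrightarrow> (\<exists>k::int. fst u - fst v = k * (int p - 1) \<and> snd u - snd v = - k * (int q - 1))"

definition cdeg :: "nat \<Rightarrow> deg" where "cdeg p = (int p, 1)"

definition homog :: "nat \<Rightarrow> nat \<Rightarrow> bpoly \<Rightarrow> deg \<Rightarrow> bool" where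
  "homog p q P d \<longleftrightarrow> (\<forall>a b. mcoeff P a b \<noteq> 0 \<longrightarrow> Leq p q (int a, int b) d)"

text \<open>An L-graded matrix factorisation  F1 --A--> F0 --B--> F1(c)  of W,
with F0, F1 free with homogeneous basis generators of degrees d0, d1.
Entry A i j (i-th basis vector of F0, j-th of F1) has degree d1!j - d0!i,
entry B j i has degree d0!i + c - d1!j.\<close>

record mf =
  d0 :: "deg list"
  d1 :: "deg list"
  mA :: "nat \<Rightarrow> nat \<Rightarrow> bpoly"
  mB :: "nat \<Rightarrow> nat \<Rightarrow> bpoly"

definition is_mf :: "nat \<Rightarrow> nat \<Rightarrow> mf \<Rightarrow> bool" where
  "is_mf p q M \<longleftrightarrow>
    (\<forall>i<length (d0 M). \<forall>j<length (d1 M).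
        homog p q (mA M i j) (dsub (d1 M ! j) (d0 M ! i))
      \<and> homog p q (mB M j i) (dsub (dadd (d0 M ! i) (cdeg p)) (d1 M ! j)))
  \<and> (\<forall>i<length (d0 M). \<forall>k<length (d0 M).
        (\<Sum>j<length (d1 M). mA M i j * mB M j k) = (if i = k then Wpot p q else 0))
  \<and> (\<forall>j<length (d1 M). \<forall>l<length (d1 M).
        (\<Sum>i<length (d0 M). mB M j i * mA M i l) = (if j = l then Wpot p q else 0))"

definition is_mor :: "nat \<Rightarrow> nat \<Rightarrow> mf \<Rightarrow> mf \<Rightarrow>
    (nat \<Rightarrow> nat \<Rightarrow> bpoly) \<Rightarrow> (nat \<Rightarrow> nat \<Rightarrow> bpoly) \<Rightarrow> bool" where
  "is_mor p q M N u0 u1 \<longleftrightarrow>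
    (\<forall>i<length (d0 N). \<forall>j<length (d0 M). homog p q (u0 i j) (dsub (d0 M ! j) (d0 N ! i)))
  \<and> (\<forall>i<length (d1 N). \<forall>j<length (d1 M). homog p q (u1 i j) (dsub (d1 M ! j) (d1 N ! i)))
  \<and> (\<forall>i<length (d0 N). \<forall>j<length (d1 M).
       (\<Sum>k<length (d0 M). u0 i k * mA M k j) = (\<Sum>k<length (d1 N). mA N i k * u1 k j))
  \<and> (\<forall>i<length (d1 N). \<forall>j<length (d0 M).
       (\<Sum>k<length (d1 M). u1 i k * mB M k j) = (\<Sum>k<length (d0 N). mB N i k * u0 k j))"

definition null_htp :: "nat \<Rightarrow> nat \<Rightarrow> mf \<Rightarrow> mf \<Rightarrow>
    (nat \<Rightarrow> nat \<Rightarrow> bpoly) \<Rightarrow> (nat \<Rightarrow> nat \<Rightarrow> bpoly) \<Rightarrow> bool" where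
  "null_htp p q M N u0 u1 \<longleftrightarrow>
    (\<exists>h0 h1.
      (\<forall>i<length (d1 N). \<forall>j<length (d0 M). homog p q (h0 i j) (dsub (d0 M ! j) (d1 N ! i)))
    \<and> (\<forall>i<length (d0 N). \<forall>j<length (d1 M).
         homog p q (h1 i j) (dsub (dsub (d1 M ! j) (cdeg p)) (d0 N ! i)))
    \<and> (\<forall>i<length (d0 N). \<forall>j<length (d0 M).
         u0 i j = (\<Sum>k<length (d1 N). mA N i k * h0 k j) + (\<Sum>k<length (d1 M). h1 i k * mB M k j))
    \<and> (\<forall>i<length (d1 N). \<forall>j<length (d1 M).
         u1 i j = (\<Sum>k<length (d0 M). h0 i k * mA M k j) + (\<Sum>k<length (d0 N). mB N i k * h1 k j)))"

text \<open>Twist M(l): M(l)_k = M_(k+l), so a generator of degree d acquires degree d - l.\<close>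
definition twist :: "deg \<Rightarrow> mf \<Rightarrow> mf" where
  "twist l M = M\<lparr>d0 := map (\<lambda>d. dsub d l) (d0 M), d1 := map (\<lambda>d. dsub d l) (d1 M)\<rparr>"

text \<open>Shift [1]:  (F1 --A--> F0 --B--> F1(c))  \<mapsto>  (F0 --(-B)--> F1(c) --(-A)--> F0(c)).\<close>
definition shift1 :: "nat \<Rightarrow> mf \<Rightarrow> mf" where
  "shift1 p M = \<lparr>d0 = map (\<lambda>d. dsub d (cdeg p)) (d1 M), d1 = d0 M,
                 mA = (\<lambda>i j. - mB M i j), mB = (\<lambda>i j. - mA M i j)\<rparr>"

text \<open>Shift [n] for n :: int; since [2] = (c) on the nose, [2k] = (k c) and [2k+1] = [1] o (k c).\<close>
definition shiftn :: "nat \<Rightarrow> int \<Rightarrow> mf \<Rightarrow> mf" where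
  "shiftn p n M = (let l = (n div 2 * int p, n div 2) in
      if even n then twist l M else shift1 p (twist l M))"

definition hom_vanish :: "nat \<Rightarrow> nat \<Rightarrow> mf \<Rightarrow> mf \<Rightarrow> bool" where
  "hom_vanish p q M N \<longleftrightarrow>
    (\<forall>n::int. \<forall>u0 u1. is_mor p q M (shiftn p n N) u0 u1 \<longrightarrow> null_htp p q M (shiftn p n N) u0 u1)"

definition orthogonal :: "nat \<Rightarrow> nat \<Rightarrow> mf \<Rightarrow> mf \<Rightarrow> bool" where
  "orthogonal p q M N \<longleftrightarrow> hom_vanish p q M N \<and> hom_vanish p q N M"

text \<open>Stabilisations (matrix factorisations) of R/(x), R/(y), R/(f):
 R/(g) = coker (S(-deg g) --g--> S) with W = g * (W/g).\<close>
definition Kx :: "nat \<Rightarrow> nat \<Rightarrow> mf" where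
  "Kx p q = \<lparr>d0 = [(0,0)], d1 = [(1,0)], mA = (\<lambda>_ _. X), mB = (\<lambda>_ _. Y * fpol p q)\<rparr>"
definition Ky :: "nat \<Rightarrow> nat \<Rightarrow> mf" where
  "Ky p q = \<lparr>d0 = [(0,0)], d1 = [(0,1)], mA = (\<lambda>_ _. Y), mB = (\<lambda>_ _. X * fpol p q)\<rparr>"
definition Kf :: "nat \<Rightarrow> nat \<Rightarrow> mf" where
  "Kf p q = \<lparr>d0 = [(0,0)], d1 = [(int p - 1, 0)], mA = (\<lambda>_ _. fpol p q), mB = (\<lambda>_ _. X * Y)\<rparr>"

definition Kxi :: "nat \<Rightarrow> nat \<Rightarrow> nat \<Rightarrow> mf" where
  "Kxi p q i = twist (int i + 1 - int p, 0) (Kx p q)"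
definition Kyj :: "nat \<Rightarrow> nat \<Rightarrow> nat \<Rightarrow> mf" where
  "Kyj p q j = twist (0, int j + 1 - int q) (Ky p q)"

end

theory Submission
  imports Defs
begin

text \<open>All objects involved are matrix factorisations of rank one, and since [2] is the twist by c
  only the twists by multiples of c and their shifts [1] have to be considered. A morphism is then
  a pair (u0, u1) of homogeneous polynomials, and it is null-homotopic as soon as
  u1 = h A_M + B_N h' with h, h' homogeneous of the right degrees: the equation for u0 follows by
  cancelling A_M, because A_N B_N = W = B_M A_M.

  For the even shifts the morphism equation u0 A_M = A_N u1 pairs x (or y) with f, and these are
  coprime, so u1 is a multiple of A_M. For the odd shifts it suffices that u1 lies in the ideal
  (x, f) (resp. (y, f)). Modulo x this ideal contains every y^b with b \<ge> q - 1, since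
  y^(q - 1) = f - x^(p - 1), and the remaining monomials y^b with b < q - 1 cannot occur in u1 for
  degree reasons, which is detected by the residue of a - p b modulo p q - 1.\<close>

lemma mcoeff_eq_iff: "P = Q \<longleftrightarrow> (\<forall>a b. mcoeff P a b = mcoeff Q a b)"
  by (auto simp: mcoeff_def poly_eq_iff)

lemma mcoeff_add [simp]: "mcoeff (P + Q) a b = mcoeff P a b + mcoeff Q a b"
  by (simp add: mcoeff_def)

lemma mcoeff_uminus [simp]: "mcoeff (- P) a b = - mcoeff P a b"
  by (simp add: mcoeff_def)

lemma mcoeff_0 [simp]: "mcoeff 0 a b = 0"
  by (simp add: mcoeff_def)

lemma mcoeff_X_power_mult [simp]:
  "mcoeff (X ^ n * P) a b = (if a < n then 0 else mcoeff P (a - n) b)"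
proof -
  have "X ^ n = [:monom 1 n:]"
    by (simp add: X_def monom_altdef poly_const_pow)
  then show ?thesis
    by (simp add: mcoeff_def coeff_monom_mult)
qed

lemma mcoeff_Y_power_mult [simp]:
  "mcoeff (Y ^ n * P) a b = (if b < n then 0 else mcoeff P a (b - n))"
proof -
  have "Y ^ n = monom 1 n"
    by (simp add: Y_def monom_altdef)
  then show ?thesis
    by (simp add: mcoeff_def coeff_monom_mult)
qed

lemma mcoeff_X_mult [simp]: "mcoeff (X * P) a b = (if a = 0 then 0 else mcoeff P (a - 1) b)"
  using mcoeff_X_power_mult[of 1] by simp

lemma mcoeff_Y_mult [simp]: "mcoeff (Y * P) a b = (if b = 0 then 0 else mcoeff P a (b - 1))"
  using mcoeff_Y_power_mult[of 1] by simp

lemma X_neq_0: "X \<noteq> 0"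
  by (simp add: X_def)

lemma Y_neq_0: "Y \<noteq> 0"
  by (simp add: Y_def)

lemma fpol_neq_0:
  assumes "2 \<le> p"
  shows "fpol p q \<noteq> 0"
proof
  have one: "mcoeff 1 a b = (if a = 0 \<and> b = 0 then 1 else 0)" for a b
    by (simp add: mcoeff_def coeff_1)
  assume "fpol p q = 0"
  then have "mcoeff (X ^ (p - 1) * 1 + Y ^ (q - 1) * 1) (p - 1) 0 = 0"
    by (simp add: fpol_def)
  then show False
    unfolding mcoeff_add mcoeff_X_power_mult mcoeff_Y_power_mult one using assms
    by (auto split: if_splits)
qed

lemma Leq_intro:
  "fst u - fst v = k * (int p - 1) \<Longrightarrow> snd u - snd v = - k * (int q - 1) \<Longrightarrow> Leq p q u v"
  unfolding Leq_def by blast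

lemma Leq_trans: "Leq p q u v \<Longrightarrow> Leq p q v w \<Longrightarrow> Leq p q u w"
  unfolding Leq_def
proof (elim exE conjE)
  fix k l
  assume "fst u - fst v = k * (int p - 1)" "snd u - snd v = - k * (int q - 1)"
    and "fst v - fst w = l * (int p - 1)" "snd v - snd w = - l * (int q - 1)"
  then show "\<exists>m. fst u - fst w = m * (int p - 1) \<and> snd u - snd w = - m * (int q - 1)"
    by (intro exI[of _ "k + l"]) (simp add: algebra_simps)
qed

lemma homog_cong: "homog p q P d \<Longrightarrow> Leq p q d d' \<Longrightarrow> homog p q P d'"
  unfolding homog_def using Leq_trans by blast

lemma homog_0 [simp]: "homog p q 0 d"
  by (simp add: homog_def)

lemma homog_add: "homog p q P d \<Longrightarrow> homog p q Q d \<Longrightarrow> homog p q (P + Q) d"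
  unfolding homog_def by (metis add.right_neutral add_0 mcoeff_add)

lemma homog_uminus: "homog p q P d \<Longrightarrow> homog p q (- P) d"
  unfolding homog_def by simp

lemma homog_diff: "homog p q P d \<Longrightarrow> homog p q Q d \<Longrightarrow> homog p q (P - Q) d"
  using homog_add[of p q P d "- Q"] homog_uminus by simp

lemma homog_coeff_shift:
  assumes "homog p q P d"
    and "\<And>a b. mcoeff Q a b \<noteq> 0 \<Longrightarrow>
      i \<le> a \<and> j \<le> b \<and> mcoeff P (a - i + i') (b - j + j') \<noteq> 0"
  shows "homog p q Q (fst d + int i - int i', snd d + int j - int j')"
  unfolding homog_def
proof (intro allI impI)
  fix a b
  assume "mcoeff Q a b \<noteq> 0"
  with assms(2) have le: "i \<le> a" "j \<le> b" and "mcoeff P (a - i + i') (b - j + j') \<noteq> 0"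
    by blast+
  then obtain k where "int (a - i + i') - fst d = k * (int p - 1)"
      "int (b - j + j') - snd d = - k * (int q - 1)"
    using assms(1) unfolding homog_def Leq_def by fastforce
  with le show "Leq p q (int a, int b) (fst d + int i - int i', snd d + int j - int j')"
    by (intro Leq_intro[of _ _ k]) (auto simp: of_nat_diff)
qed

lemma homog_X_power_mult: "homog p q P d \<Longrightarrow> homog p q (X ^ n * P) (fst d + int n, snd d)"
  by (rule homog_coeff_shift[where i = n and j = 0 and i' = 0 and j' = 0, simplified])
    (simp_all split: if_splits)

lemma homog_Y_power_mult: "homog p q P d \<Longrightarrow> homog p q (Y ^ n * P) (fst d, snd d + int n)"
  by (rule homog_coeff_shift[where i = 0 and j = n and i' = 0 and j' = 0, simplified])
    (simp_all split: if_splits)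

definition quot_X :: "bpoly \<Rightarrow> bpoly" where
  "quot_X w = map_poly (poly_shift 1) w"

definition quot_Y :: "bpoly \<Rightarrow> bpoly" where
  "quot_Y w = poly_shift 1 w"

definition x_free_quot_Y_power :: "nat \<Rightarrow> bpoly \<Rightarrow> bpoly" where
  "x_free_quot_Y_power m w = poly_shift m (map_poly (poly_cutoff 1) w)"

definition y_free_quot_X_power :: "nat \<Rightarrow> bpoly \<Rightarrow> bpoly" where
  "y_free_quot_X_power m w = map_poly (poly_shift m) (poly_cutoff 1 w)"

lemma mcoeff_quot_X [simp]: "mcoeff (quot_X w) a b = mcoeff w (a + 1) b"
  by (simp add: quot_X_def mcoeff_def coeff_map_poly coeff_poly_shift)

lemma mcoeff_quot_Y [simp]: "mcoeff (quot_Y w) a b = mcoeff w a (b + 1)"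
  by (simp add: quot_Y_def mcoeff_def coeff_poly_shift)

lemma mcoeff_x_free_quot_Y_power [simp]:
  "mcoeff (x_free_quot_Y_power m w) a b = (if a = 0 then mcoeff w 0 (b + m) else 0)"
  by (simp add: x_free_quot_Y_power_def mcoeff_def coeff_map_poly coeff_poly_shift
      coeff_poly_cutoff)

lemma mcoeff_y_free_quot_X_power [simp]:
  "mcoeff (y_free_quot_X_power m w) a b = (if b = 0 then mcoeff w (a + m) 0 else 0)"
  by (simp add: y_free_quot_X_power_def mcoeff_def coeff_map_poly coeff_poly_shift
      coeff_poly_cutoff)

lemma homog_quot_X: "homog p q w d \<Longrightarrow> homog p q (quot_X w) (fst d - 1, snd d)"
  by (rule homog_coeff_shift[where i = 0 and j = 0 and i' = 1 and j' = 0, simplified]) simp_all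

lemma homog_quot_Y: "homog p q w d \<Longrightarrow> homog p q (quot_Y w) (fst d, snd d - 1)"
  by (rule homog_coeff_shift[where i = 0 and j = 0 and i' = 0 and j' = 1, simplified]) simp_all

lemma homog_x_free_quot_Y_power:
  "homog p q w d \<Longrightarrow> homog p q (x_free_quot_Y_power m w) (fst d, snd d - int m)"
  by (rule homog_coeff_shift[where i = 0 and j = 0 and i' = 0 and j' = m, simplified])
    (simp_all split: if_splits)

lemma homog_y_free_quot_X_power:
  "homog p q w d \<Longrightarrow> homog p q (y_free_quot_X_power m w) (fst d - int m, snd d)"
  by (rule homog_coeff_shift[where i = 0 and j = 0 and i' = m and j' = 0, simplified])
    (simp_all split: if_splits)

lemma X_mult_quot_X_plus:
  assumes "\<forall>b<m. mcoeff w 0 b = 0"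
  shows "w = X * quot_X w + Y ^ m * x_free_quot_Y_power m w"
  unfolding mcoeff_eq_iff using assms by auto

lemma Y_mult_quot_Y_plus:
  assumes "\<forall>a<m. mcoeff w a 0 = 0"
  shows "w = Y * quot_Y w + X ^ m * y_free_quot_X_power m w"
  unfolding mcoeff_eq_iff using assms by auto

text \<open>The map (a, b) \<mapsto> a - p b sends the relation (p - 1, 1 - q) to p q - 1, so it induces
  a homomorphism from L to the integers modulo p q - 1.\<close>
lemma not_Leq_of_small_residue:
  assumes "z = (fst u - fst v) - int p * (snd u - snd v)" "0 < \<bar>z\<bar>" "\<bar>z\<bar> < int p * int q - 1"
  shows "\<not> Leq p q u v"
proof
  assume "Leq p q u v"
  then obtain k where "fst u - fst v = k * (int p - 1)" "snd u - snd v = - k * (int q - 1)"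
    unfolding Leq_def by blast
  with assms(1) have "z = k * (int p * int q - 1)"
    by (simp add: algebra_simps)
  then have "\<bar>int p * int q - 1\<bar> \<le> \<bar>z\<bar>"
    using assms(2) by (intro dvd_imp_le_int) auto
  with assms(3) show False
    by linarith
qed

lemma not_Leq_Y_power_degree:
  assumes "1 \<le> r" "r \<le> int p - 1" "b < q - 1"
  shows "\<not> Leq p q (0, int b) (r + k * int p, k)"
proof (rule not_Leq_of_small_residue)
  have "int p * int b \<le> int p * (int q - 2)"
    using assms(3) by (intro mult_left_mono) auto
  moreover have "int p * (int q - 2) = int p * int q - 2 * int p"
    by (simp add: algebra_simps)
  moreover have "0 \<le> int p * int b"
    by simp
  ultimately show "0 < \<bar>- r - int p * int b\<bar>" "\<bar>- r - int p * int b\<bar> < int p * int q - 1"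
    using assms by linarith+
qed (simp add: algebra_simps)

lemma not_Leq_X_power_degree:
  assumes "2 \<le> p" "1 \<le> r" "r \<le> int q - 1" "a < p - 1"
  shows "\<not> Leq p q (int a, 0) (k * int p, k + r)"
proof (rule not_Leq_of_small_residue)
  have "int p * r \<le> int p * (int q - 1)"
    using assms(3) by (intro mult_left_mono) auto
  moreover have "int p * (int q - 1) = int p * int q - int p"
    by (simp add: algebra_simps)
  moreover have "int p * 1 \<le> int p * r"
    using assms(2) by (intro mult_left_mono) auto
  ultimately show "0 < \<bar>int a + int p * r\<bar>" "\<bar>int a + int p * r\<bar> < int p * int q - 1"
    using assms by linarith+
qed (simp add: algebra_simps)

lemma fpol_mult_eq_mult_X_factor:
  assumes "2 \<le> p" "u * X = fpol p q * w"
  shows "w = X * quot_X w" "u = fpol p q * quot_X w"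
proof -
  have eq: "X * u = X ^ (p - 1) * w + Y ^ (q - 1) * w"
    using assms(2) by (simp add: fpol_def algebra_simps)
  have "mcoeff w 0 b = 0" for b
    using arg_cong[OF eq, of "\<lambda>P. mcoeff P 0 (b + (q - 1))"] assms(1) by simp
  then show w: "w = X * quot_X w"
    unfolding mcoeff_eq_iff by (auto simp: gr0_conv_Suc)
  have "X * u = X * (fpol p q * quot_X w)"
    using assms(2) w by (simp add: algebra_simps)
  then show "u = fpol p q * quot_X w"
    using X_neq_0 by simp
qed

lemma fpol_mult_eq_mult_Y_factor:
  assumes "2 \<le> q" "u * Y = fpol p q * w"
  shows "w = Y * quot_Y w" "u = fpol p q * quot_Y w"
proof -
  have eq: "Y * u = X ^ (p - 1) * w + Y ^ (q - 1) * w"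
    using assms(2) by (simp add: fpol_def algebra_simps)
  have "mcoeff w a 0 = 0" for a
    using arg_cong[OF eq, of "\<lambda>P. mcoeff P (a + (p - 1)) 0"] assms(1) by simp
  then show w: "w = Y * quot_Y w"
    unfolding mcoeff_eq_iff by (auto simp: gr0_conv_Suc)
  have "Y * u = Y * (fpol p q * quot_Y w)"
    using assms(2) w by (simp add: algebra_simps)
  then show "u = fpol p q * quot_Y w"
    using Y_neq_0 by simp
qed

lemma X_fpol_decomposition:
  assumes "2 \<le> p" "2 \<le> q" "homog p q w d" "\<forall>b<q - 1. \<not> Leq p q (0, int b) d"
  obtains g h where "w = X * g + fpol p q * h"
    "homog p q g (fst d - 1, snd d)" "homog p q h (fst d - (int p - 1), snd d)"
proof
  let ?h = "x_free_quot_Y_power (q - 1) w"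
  have "\<forall>b<q - 1. mcoeff w 0 b = 0"
    using assms(3,4) unfolding homog_def by (metis of_nat_0)
  then have "w = X * quot_X w + Y ^ (q - 1) * ?h"
    by (rule X_mult_quot_X_plus)
  also have "\<dots> = X * (quot_X w - X ^ (p - 2) * ?h) + fpol p q * ?h"
  proof -
    have "X * X ^ (p - 2) = X ^ (p - 1)"
      using assms(1) by (simp flip: power_Suc add: Suc_diff_Suc numeral_2_eq_2)
    then show ?thesis
      by (simp add: fpol_def algebra_simps)
  qed
  finally show "w = X * (quot_X w - X ^ (p - 2) * ?h) + fpol p q * ?h" .
  have h: "homog p q ?h (fst d, snd d - int (q - 1))"
    using homog_x_free_quot_Y_power[OF assms(3)] .
  show "homog p q ?h (fst d - (int p - 1), snd d)"
    using assms(1,2) by (intro homog_cong[OF h] Leq_intro[of _ _ 1]) auto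
  have "homog p q (X ^ (p - 2) * ?h) (fst d - 1, snd d)"
    using assms(1,2)
    by (intro homog_cong[OF homog_X_power_mult[OF h]] Leq_intro[of _ _ 1]) auto
  then show "homog p q (quot_X w - X ^ (p - 2) * ?h) (fst d - 1, snd d)"
    by (intro homog_diff homog_quot_X assms(3))
qed

lemma Y_fpol_decomposition:
  assumes "2 \<le> p" "2 \<le> q" "homog p q w d" "\<forall>a<p - 1. \<not> Leq p q (int a, 0) d"
  obtains g h where "w = Y * g + fpol p q * h"
    "homog p q g (fst d, snd d - 1)" "homog p q h (fst d - (int p - 1), snd d)"
proof
  let ?h = "y_free_quot_X_power (p - 1) w"
  have "\<forall>a<p - 1. mcoeff w a 0 = 0"
    using assms(3,4) unfolding homog_def by (metis of_nat_0)
  then have "w = Y * quot_Y w + X ^ (p - 1) * ?h"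
    by (rule Y_mult_quot_Y_plus)
  also have "\<dots> = Y * (quot_Y w - Y ^ (q - 2) * ?h) + fpol p q * ?h"
  proof -
    have "Y * Y ^ (q - 2) = Y ^ (q - 1)"
      using assms(2) by (simp flip: power_Suc add: Suc_diff_Suc numeral_2_eq_2)
    then show ?thesis
      by (simp add: fpol_def algebra_simps)
  qed
  finally show "w = Y * (quot_Y w - Y ^ (q - 2) * ?h) + fpol p q * ?h" .
  show h: "homog p q ?h (fst d - (int p - 1), snd d)"
    using homog_y_free_quot_X_power[OF assms(3), of "p - 1"] assms(1)
    by (simp add: of_nat_diff)
  have "homog p q (Y ^ (q - 2) * ?h) (fst d, snd d - 1)"
    using assms(1,2)
    by (intro homog_cong[OF homog_Y_power_mult[OF h]] Leq_intro[of _ _ "-1"]) auto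
  then show "homog p q (quot_Y w - Y ^ (q - 2) * ?h) (fst d, snd d - 1)"
    by (intro homog_diff homog_quot_Y assms(3))
qed

lemma is_mor_rank_one:
  assumes "length (d0 M) = 1" "length (d1 M) = 1" "length (d0 N) = 1" "length (d1 N) = 1"
  shows "is_mor p q M N u0 u1 \<longleftrightarrow>
    homog p q (u0 0 0) (dsub (d0 M ! 0) (d0 N ! 0)) \<and>
    homog p q (u1 0 0) (dsub (d1 M ! 0) (d1 N ! 0)) \<and>
    u0 0 0 * mA M 0 0 = mA N 0 0 * u1 0 0 \<and> u1 0 0 * mB M 0 0 = mB N 0 0 * u0 0 0"
  using assms by (simp add: is_mor_def)

lemma null_htp_rank_one:
  assumes "length (d0 M) = 1" "length (d1 M) = 1" "length (d0 N) = 1" "length (d1 N) = 1"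
    and factorisations: "mA N 0 0 * mB N 0 0 = mB M 0 0 * mA M 0 0" "mA M 0 0 \<noteq> 0"
    and mor: "u0 0 0 * mA M 0 0 = mA N 0 0 * u1 0 0"
    and h: "homog p q h (dsub (d0 M ! 0) (d1 N ! 0))"
    and h': "homog p q h' (dsub (dsub (d1 M ! 0) (cdeg p)) (d0 N ! 0))"
    and u1: "u1 0 0 = h * mA M 0 0 + mB N 0 0 * h'"
  shows "null_htp p q M N u0 u1"
proof -
  have "u0 0 0 * mA M 0 0 = (mA N 0 0 * h + h' * mB M 0 0) * mA M 0 0"
    using mor factorisations(1) unfolding u1 by (simp add: algebra_simps)
  then have u0: "u0 0 0 = mA N 0 0 * h + h' * mB M 0 0"
    using factorisations(2) by simp
  show ?thesis
    unfolding null_htp_def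
    by (rule exI[of _ "\<lambda>_ _. h"], rule exI[of _ "\<lambda>_ _. h'"])
      (use assms(1-4) h h' u0 u1 in simp)
qed

lemma Kxi_data:
  "d0 (Kxi p q i) = [(int p - int i - 1, 0)]" "d1 (Kxi p q i) = [(int p - int i, 0)]"
  "mA (Kxi p q i) = (\<lambda>_ _. X)" "mB (Kxi p q i) = (\<lambda>_ _. Y * fpol p q)"
  by (simp_all add: Kxi_def Kx_def twist_def dsub_def)

lemma Kyj_data:
  "d0 (Kyj p q j) = [(0, int q - int j - 1)]" "d1 (Kyj p q j) = [(0, int q - int j)]"
  "mA (Kyj p q j) = (\<lambda>_ _. Y)" "mB (Kyj p q j) = (\<lambda>_ _. X * fpol p q)"
  by (simp_all add: Kyj_def Ky_def twist_def dsub_def)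

lemma Kf_data:
  "d0 (Kf p q) = [(0, 0)]" "d1 (Kf p q) = [(int p - 1, 0)]"
  "mA (Kf p q) = (\<lambda>_ _. fpol p q)" "mB (Kf p q) = (\<lambda>_ _. X * Y)"
  by (simp_all add: Kf_def)

lemma twist_data:
  "d0 (twist l M) = map (\<lambda>d. dsub d l) (d0 M)" "d1 (twist l M) = map (\<lambda>d. dsub d l) (d1 M)"
  "mA (twist l M) = mA M" "mB (twist l M) = mB M"
  by (simp_all add: twist_def)

lemma shift1_data:
  "d0 (shift1 p M) = map (\<lambda>d. dsub d (cdeg p)) (d1 M)" "d1 (shift1 p M) = d0 M"
  "mA (shift1 p M) = (\<lambda>i j. - mB M i j)" "mB (shift1 p M) = (\<lambda>i j. - mA M i j)"
  by (simp_all add: shift1_def)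

lemma dsub_Pair [simp]: "dsub (a, b) (c, d) = (a - c, b - d)"
  by (simp add: dsub_def)

lemmas rank_one_data = Kxi_data Kyj_data Kf_data twist_data shift1_data cdeg_def

lemma null_htp_Kxi_twist_Kf:
  assumes "2 \<le> p" "is_mor p q (Kxi p q i) (twist (a, b) (Kf p q)) u0 u1"
  shows "null_htp p q (Kxi p q i) (twist (a, b) (Kf p q)) u0 u1"
proof -
  have hom: "homog p q (u1 0 0) (a + 1 - int i, b)"
    and mor: "u0 0 0 * X = fpol p q * u1 0 0"
    using assms(2) by (simp_all add: is_mor_rank_one rank_one_data algebra_simps)
  then obtain v where "u1 0 0 = X * v" "homog p q v (a - int i, b)"
    using fpol_mult_eq_mult_X_factor[OF assms(1) mor] homog_quot_X[OF hom]
    by (auto simp: algebra_simps)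
  then show ?thesis
    using assms(2) X_neq_0
    by (intro null_htp_rank_one[where h = v and h' = 0])
      (simp_all add: is_mor_rank_one rank_one_data algebra_simps)
qed

lemma null_htp_Kf_twist_Kxi:
  assumes "2 \<le> p" "is_mor p q (Kf p q) (twist (a, b) (Kxi p q i)) u0 u1"
  shows "null_htp p q (Kf p q) (twist (a, b) (Kxi p q i)) u0 u1"
proof -
  have hom: "homog p q (u0 0 0) (a + int i + 1 - int p, b)"
    and mor: "u1 0 0 * X = fpol p q * u0 0 0"
    using assms(2) by (simp_all add: is_mor_rank_one rank_one_data algebra_simps)
  then obtain v where "u0 0 0 = X * v" "u1 0 0 = fpol p q * v" "homog p q v (a + int i - int p, b)"
    using fpol_mult_eq_mult_X_factor[OF assms(1) mor] homog_quot_X[OF hom]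
    by (auto simp: algebra_simps)
  then show ?thesis
    using fpol_neq_0[OF assms(1)]
    by (intro null_htp_rank_one[where h = v and h' = 0])
      (simp_all add: is_mor_rank_one rank_one_data algebra_simps)
qed

lemma null_htp_Kyj_twist_Kf:
  assumes "2 \<le> q" "is_mor p q (Kyj p q j) (twist (a, b) (Kf p q)) u0 u1"
  shows "null_htp p q (Kyj p q j) (twist (a, b) (Kf p q)) u0 u1"
proof -
  have hom: "homog p q (u1 0 0) (a + 1 - int p, int q - int j + b)"
    and mor: "u0 0 0 * Y = fpol p q * u1 0 0"
    using assms(2) by (simp_all add: is_mor_rank_one rank_one_data algebra_simps)
  then obtain v where "u1 0 0 = Y * v" "homog p q v (a + 1 - int p, int q - int j + b - 1)"
    using fpol_mult_eq_mult_Y_factor[OF assms(1) mor] homog_quot_Y[OF hom]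
    by (auto simp: algebra_simps)
  then show ?thesis
    using assms(2) Y_neq_0
    by (intro null_htp_rank_one[where h = v and h' = 0])
      (simp_all add: is_mor_rank_one rank_one_data algebra_simps)
qed

lemma null_htp_Kf_twist_Kyj:
  assumes "2 \<le> p" "2 \<le> q" "is_mor p q (Kf p q) (twist (a, b) (Kyj p q j)) u0 u1"
  shows "null_htp p q (Kf p q) (twist (a, b) (Kyj p q j)) u0 u1"
proof -
  have hom: "homog p q (u0 0 0) (a, b + int j + 1 - int q)"
    and mor: "u1 0 0 * Y = fpol p q * u0 0 0"
    using assms(3) by (simp_all add: is_mor_rank_one rank_one_data algebra_simps)
  then obtain v where "u0 0 0 = Y * v" "u1 0 0 = fpol p q * v" "homog p q v (a, b + int j - int q)"
    using fpol_mult_eq_mult_Y_factor[OF assms(2) mor] homog_quot_Y[OF hom]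
    by (auto simp: algebra_simps)
  then show ?thesis
    using fpol_neq_0[OF assms(1)]
    by (intro null_htp_rank_one[where h = v and h' = 0])
      (simp_all add: is_mor_rank_one rank_one_data algebra_simps)
qed

lemma null_htp_Kxi_shift_Kf:
  assumes "2 \<le> p" "2 \<le> q" "1 \<le> i" "i \<le> p - 1"
    and "is_mor p q (Kxi p q i) (shift1 p (twist (k * int p, k) (Kf p q))) u0 u1"
  shows "null_htp p q (Kxi p q i) (shift1 p (twist (k * int p, k) (Kf p q))) u0 u1"
proof -
  let ?d = "(int p - int i + k * int p, k)"
  have "homog p q (u1 0 0) ?d"
    using assms(5) by (simp add: is_mor_rank_one rank_one_data algebra_simps)
  moreover have "\<forall>b<q - 1. \<not> Leq p q (0, int b) ?d"
    using assms(3,4) not_Leq_Y_power_degree[of "int p - int i"] by auto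
  ultimately obtain gx gf where "u1 0 0 = X * gx + fpol p q * gf"
    "homog p q gx (fst ?d - 1, snd ?d)" "homog p q gf (fst ?d - (int p - 1), snd ?d)"
    using X_fpol_decomposition[OF assms(1,2)] by blast
  then show ?thesis
    using assms(5) X_neq_0
    by (intro null_htp_rank_one[where h = gx and h' = "- gf"])
      (simp_all add: is_mor_rank_one rank_one_data algebra_simps homog_uminus)
qed

lemma null_htp_Kf_shift_Kxi:
  assumes "2 \<le> p" "2 \<le> q" "1 \<le> i" "i \<le> p - 1"
    and "is_mor p q (Kf p q) (shift1 p (twist (k * int p, k) (Kxi p q i))) u0 u1"
  shows "null_htp p q (Kf p q) (shift1 p (twist (k * int p, k) (Kxi p q i))) u0 u1"
proof -
  let ?d = "(int i + k * int p, k)"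
  have "homog p q (u1 0 0) ?d"
    using assms(5) by (simp add: is_mor_rank_one rank_one_data algebra_simps)
  moreover have "\<forall>b<q - 1. \<not> Leq p q (0, int b) ?d"
    using assms(3,4) not_Leq_Y_power_degree[of "int i"] by auto
  ultimately obtain gx gf where "u1 0 0 = X * gx + fpol p q * gf"
    "homog p q gx (fst ?d - 1, snd ?d)" "homog p q gf (fst ?d - (int p - 1), snd ?d)"
    using X_fpol_decomposition[OF assms(1,2)] by blast
  then show ?thesis
    using assms(5) fpol_neq_0[OF assms(1)]
    by (intro null_htp_rank_one[where h = gf and h' = "- gx"])
      (simp_all add: is_mor_rank_one rank_one_data algebra_simps homog_uminus)
qed

lemma null_htp_Kyj_shift_Kf:
  assumes "2 \<le> p" "2 \<le> q" "1 \<le> j" "j \<le> q - 1"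
    and "is_mor p q (Kyj p q j) (shift1 p (twist (k * int p, k) (Kf p q))) u0 u1"
  shows "null_htp p q (Kyj p q j) (shift1 p (twist (k * int p, k) (Kf p q))) u0 u1"
proof -
  let ?d = "(k * int p, k + (int q - int j))"
  have "homog p q (u1 0 0) ?d"
    using assms(5) by (simp add: is_mor_rank_one rank_one_data algebra_simps)
  moreover have "\<forall>a<p - 1. \<not> Leq p q (int a, 0) ?d"
    using assms(1,3,4) not_Leq_X_power_degree[of p "int q - int j"] by auto
  ultimately obtain gy gf where "u1 0 0 = Y * gy + fpol p q * gf"
    "homog p q gy (fst ?d, snd ?d - 1)" "homog p q gf (fst ?d - (int p - 1), snd ?d)"
    using Y_fpol_decomposition[OF assms(1,2)] by blast
  then show ?thesis
    using assms(5) Y_neq_0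
    by (intro null_htp_rank_one[where h = gy and h' = "- gf"])
      (simp_all add: is_mor_rank_one rank_one_data algebra_simps homog_uminus)
qed

lemma null_htp_Kf_shift_Kyj:
  assumes "2 \<le> p" "2 \<le> q" "1 \<le> j" "j \<le> q - 1"
    and "is_mor p q (Kf p q) (shift1 p (twist (k * int p, k) (Kyj p q j))) u0 u1"
  shows "null_htp p q (Kf p q) (shift1 p (twist (k * int p, k) (Kyj p q j))) u0 u1"
proof -
  let ?d = "(int p - 1 + k * int p, k + int j + 1 - int q)"
  have "homog p q (u1 0 0) ?d"
    using assms(5) by (simp add: is_mor_rank_one rank_one_data algebra_simps)
  moreover have "\<forall>a<p - 1. \<not> Leq p q (int a, 0) ?d"
  proof (intro allI impI notI)
    fix a
    assume a: "a < p - 1" and "Leq p q (int a, 0) ?d"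
    from this(2) have "Leq p q (int a, 0) (k * int p, k + int j)"
      by (rule Leq_trans) (rule Leq_intro[of _ _ 1], simp_all)
    moreover have "1 \<le> int j" "int j \<le> int q - 1"
      using assms(3,4) by auto
    ultimately show False
      using not_Leq_X_power_degree[OF assms(1) _ _ a] by blast
  qed
  ultimately obtain gy gf where "u1 0 0 = Y * gy + fpol p q * gf"
    "homog p q gy (fst ?d, snd ?d - 1)" "homog p q gf (fst ?d - (int p - 1), snd ?d)"
    using Y_fpol_decomposition[OF assms(1,2)] by blast
  then show ?thesis
    using assms(5) fpol_neq_0[OF assms(1)]
    by (intro null_htp_rank_one[where h = gf and h' = "- gy"])
      (simp_all add: is_mor_rank_one rank_one_data algebra_simps homog_uminus)
qed

lemma hom_vanishI:
  assumes "\<And>k u0 u1. is_mor p q M (twist (k * int p, k) N) u0 u1 \<Longrightarrow>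
      null_htp p q M (twist (k * int p, k) N) u0 u1"
    and "\<And>k u0 u1. is_mor p q M (shift1 p (twist (k * int p, k) N)) u0 u1 \<Longrightarrow>
      null_htp p q M (shift1 p (twist (k * int p, k) N)) u0 u1"
  shows "hom_vanish p q M N"
  unfolding hom_vanish_def shiftn_def Let_def using assms by simp

lemma orthogonal_Kxi_Kf:
  assumes "2 \<le> p" "2 \<le> q" "1 \<le> i" "i \<le> p - 1"
  shows "orthogonal p q (Kxi p q i) (Kf p q)"
  unfolding orthogonal_def
  using null_htp_Kxi_twist_Kf[OF assms(1)] null_htp_Kxi_shift_Kf[OF assms]
    null_htp_Kf_twist_Kxi[OF assms(1)] null_htp_Kf_shift_Kxi[OF assms]
  by (simp add: hom_vanishI)

lemma orthogonal_Kyj_Kf: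
  assumes "2 \<le> p" "2 \<le> q" "1 \<le> j" "j \<le> q - 1"
  shows "orthogonal p q (Kyj p q j) (Kf p q)"
  unfolding orthogonal_def
  using null_htp_Kyj_twist_Kf[OF assms(2)] null_htp_Kyj_shift_Kf[OF assms]
    null_htp_Kf_twist_Kyj[OF assms(1,2)] null_htp_Kf_shift_Kyj[OF assms]
  by (simp add: hom_vanishI)

theorem lemma2p8:
  fixes p q :: nat
  assumes "2 \<le> p" and "2 \<le> q"
  shows "(\<forall>i. 1 \<le> i \<and> i \<le> p - 1 \<longrightarrow> orthogonal p q (Kxi p q i) (Kf p q))
       \<and> (\<forall>j. 1 \<le> j \<and> j \<le> q - 1 \<longrightarrow> orthogonal p q (Kyj p q j) (Kf p q))"
  using orthogonal_Kxi_Kf[OF assms] orthogonal_Kyj_Kf[OF assms] by blast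

end
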